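(* For $j=1,2$ let $u_{0,j}\in H^1(\mathbb R)$ and let $\mu_{0,j}$ be a nonnegative finite Radon measure on $\mathbb R$ whose absolutely continuous part is $u_{0,j}'^2\,dx$; put $C_j=\mu_{0,j}(\mathbb R)$ and $F_{0,j}(x)=\mu_{0,j}((-\infty,x))$. Assume $$\int_{-\infty}^0F_{0,j}(x)\,dx+\int_0^\infty\big(C_j-F_{0,j}(x)\big)\,dx<\infty,\qquad j=1,2.$$ Let $(u_j(t),\mu_j(t))$ be the conservative solution of the Hunter--Saxton equation with initial data $(u_{0,j},\mu_{0,j})$, and for $t\ge0$, $\eta\in(0,C_j]$ let $$\chi_j(t,\eta)=\sup\{x\mid \mu_j(t)((-\infty,x))<\eta\},\qquad \mathcal U_j(t,\eta)=u_j(t,\chi_j(t,\eta)).$$ Define $$d\big((u_1(t),\mu_1(t)),(u_2(t),\mu_2(t))\big)=\|\mathcal U_1(t,C_1\,\cdot)-\mathcal U_2(t,C_2\,\cdot)\|_{L^\infty([0,1])}+\|\chi_1(t,C_1\,\cdot)-\chi_2(t,C_2\,\cdot)\|_{L^1([0,1])}+|C_1-C_2|.$$ Then for all $t\ge0$, $$d\big((u_1(t),\mu_1(t)),(u_2(t),\mu_2(t))\big)\le\Big(1+t+\frac18t^2\Big)\,d\big((u_{0,1},\mu_{0,1}),(u_{0,2},\mu_{0,2})\big).$$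
   Context: The (integrated, augmented) Hunter--Saxton system is $u_t+uu_x=\frac14\int_{-\infty}^x d\mu-\frac14\int_x^\infty d\mu$, $\mu_t+(u\mu)_x=0$. Its conservative solution with initial data $(u_0,\mu_0)$ (with $C=\mu_0(\mathbb R)$) is defined as follows. Let $F_0(x)=\mu_0((-\infty,x))$ and define $\bar y_0(\xi)=\sup\{x\mid x+F_0(x)<\xi\}$, $\bar U_0(\xi)=u_0(\bar y_0(\xi))$, $\bar H_0(\xi)=\xi-\bar y_0(\xi)$ for $\xi\in\mathbb R$. For $t\ge0$ set $\bar y(t,\xi)=\frac14(\bar H_0(\xi)-\frac12C)t^2+\bar U_0(\xi)t+\bar y_0(\xi)$, $\bar U(t,\xi)=\frac12(\bar H_0(\xi)-\frac12C)t+\bar U_0(\xi)$, $\bar H(t,\xi)=\bar H_0(\xi)$. Then $\xi\mapsto\bar y(t,\xi)$ is nondecreasing and onto $\mathbb R$, and the conservative solution is $u(t,x)=\bar U(t,\xi)$ for any $\xi$ with $\bar y(t,\xi)=x$, and $\mu(t)=\bar y(t,\cdot)_\#(\bar H_\xi\,d\xi)$ (push-forward measure). In particular $\mu(t)(\mathbb R)=C$ for all $t$. *)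

theory Defs
  imports "HOL-Analysis.Analysis" "HOL-Probability.Essential_Supremum"
begin

text \<open>u in H^1(R) (continuous representative) with weak derivative u':
  u, u' Borel measurable and square integrable, u absolutely continuous with
  u b - u a = integral of u' over [a,b].\<close>
definition H1_with_deriv :: "(real \<Rightarrow> real) \<Rightarrow> (real \<Rightarrow> real) \<Rightarrow> bool" where
  "H1_with_deriv u u' \<longleftrightarrow>
     u \<in> borel_measurable borel \<and> u' \<in> borel_measurable borel \<and>
     integrable lborel (\<lambda>x. (u x)\<^sup>2) \<and> integrable lborel (\<lambda>x. (u' x)\<^sup>2) \<and>
     (\<forall>a b. a \<le> b \<longrightarrow> (u' has_integral (u b - u a)) {a..b})"

text \<open>Nonnegative finite Radon (= finite Borel) measure on R.\<close>
definition finite_borel_measure :: "real measure \<Rightarrow> bool" where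
  "finite_borel_measure \<mu> \<longleftrightarrow> sets \<mu> = sets borel \<and> finite_measure \<mu>"

text \<open>The absolutely continuous part (Lebesgue decomposition w.r.t. dx) of \<mu>
  is g dx: outside a Borel Lebesgue-null set N (carrying the singular part)
  \<mu> coincides with g dx.\<close>
definition ac_part_density :: "real measure \<Rightarrow> (real \<Rightarrow> real) \<Rightarrow> bool" where
  "ac_part_density \<mu> g \<longleftrightarrow>
     (\<exists>N \<in> sets borel. emeasure lborel N = 0 \<and>
        (\<forall>A \<in> sets borel. emeasure \<mu> (A - N) = (\<integral>\<^sup>+ x\<in>A. ennreal (g x) \<partial>lborel)))"

definition F0 :: "real measure \<Rightarrow> real \<Rightarrow> real" where
  "F0 \<mu> x = measure \<mu> {..<x}"

definition Ctot :: "real measure \<Rightarrow> real" where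
  "Ctot \<mu> = measure \<mu> UNIV"

definition ybar0 :: "real measure \<Rightarrow> real \<Rightarrow> real" where
  "ybar0 \<mu> \<xi> = Sup {x. x + F0 \<mu> x < \<xi>}"

definition Ubar0 :: "(real \<Rightarrow> real) \<Rightarrow> real measure \<Rightarrow> real \<Rightarrow> real" where
  "Ubar0 u \<mu> \<xi> = u (ybar0 \<mu> \<xi>)"

definition Hbar0 :: "real measure \<Rightarrow> real \<Rightarrow> real" where
  "Hbar0 \<mu> \<xi> = \<xi> - ybar0 \<mu> \<xi>"

definition ybar :: "(real \<Rightarrow> real) \<Rightarrow> real measure \<Rightarrow> real \<Rightarrow> real \<Rightarrow> real" where
  "ybar u \<mu> t \<xi> = 1/4 * (Hbar0 \<mu> \<xi> - Ctot \<mu> / 2) * t\<^sup>2 + Ubar0 u \<mu> \<xi> * t + ybar0 \<mu> \<xi>"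

definition Ubar :: "(real \<Rightarrow> real) \<Rightarrow> real measure \<Rightarrow> real \<Rightarrow> real \<Rightarrow> real" where
  "Ubar u \<mu> t \<xi> = 1/2 * (Hbar0 \<mu> \<xi> - Ctot \<mu> / 2) * t + Ubar0 u \<mu> \<xi>"

definition HS_u :: "(real \<Rightarrow> real) \<Rightarrow> real measure \<Rightarrow> real \<Rightarrow> real \<Rightarrow> real" where
  "HS_u u \<mu> t x = Ubar u \<mu> t (SOME \<xi>. ybar u \<mu> t \<xi> = x)"

definition HS_mu :: "(real \<Rightarrow> real) \<Rightarrow> real measure \<Rightarrow> real \<Rightarrow> real measure" where
  "HS_mu u \<mu> t = distr (density lborel (\<lambda>\<xi>. ennreal (deriv (Hbar0 \<mu>) \<xi>))) borel (ybar u \<mu> t)"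

definition chi :: "real measure \<Rightarrow> real \<Rightarrow> real" where
  "chi \<mu> \<eta> = Sup {x. measure \<mu> {..<x} < \<eta>}"

definition UU :: "(real \<Rightarrow> real) \<Rightarrow> real measure \<Rightarrow> real \<Rightarrow> real" where
  "UU u \<mu> \<eta> = u (chi \<mu> \<eta>)"

definition dHS :: "(real \<Rightarrow> real) \<Rightarrow> real measure \<Rightarrow> (real \<Rightarrow> real) \<Rightarrow> real measure \<Rightarrow> ereal" where
  "dHS u1 \<mu>1 u2 \<mu>2 =
     esssup (restrict_space lborel {0..1})
        (\<lambda>s. ereal \<bar>UU u1 \<mu>1 (Ctot \<mu>1 * s) - UU u2 \<mu>2 (Ctot \<mu>2 * s)\<bar>)
   + enn2ereal (\<integral>\<^sup>+ s\<in>{0..1}. ennreal \<bar>chi \<mu>1 (Ctot \<mu>1 * s) - chi \<mu>2 (Ctot \<mu>2 * s)\<bar> \<partial>lborel)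
   + ereal \<bar>Ctot \<mu>1 - Ctot \<mu>2\<bar>"

end

theory Submission
  imports Defs "HOL-Analysis.Radon_Nikodym"
begin

text \<open>In Lagrangian coordinates the conservative solution is explicit: the label \<open>\<xi>\<close> moves along
  the parabola \<open>y0 \<xi> + U0 \<xi> t + (H \<xi> - C/2) t\<^sup>2/4\<close> and its energy label \<open>H \<xi>\<close> never changes.
  The mass level \<open>\<eta>\<close> is always carried by the same label \<open>Xi \<eta>\<close>, so \<open>\<chi>(t, C s)\<close> and
  \<open>\<U>(t, C s)\<close> are the initial quantiles plus polynomials in \<open>t\<close> whose coefficients differ
  between two solutions only through \<open>C s - C/2\<close> and \<open>\<U>(0, C s)\<close>; with \<open>\<bar>s - 1/2\<bar> \<le> 1/2\<close>
  this gives the factor \<open>1 + t + t\<^sup>2/8\<close>.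
  The work lies in identifying \<open>\<mu>(t)\<close>: the nonexpansive \<open>H\<close> is the integral of its a.e.
  derivative, so \<open>\<mu>(t)\<close> is the push-forward of the Lebesgue-Stieltjes measure of \<open>H\<close>, and the
  Lagrangian map is nondecreasing because Cauchy-Schwarz bounds \<open>(\<Delta>U)\<^sup>2\<close> by \<open>\<Delta>H \<Delta>Y\<close>.\<close>

section \<open>Nonexpansive nondecreasing functions\<close>

lemma emeasure_measure_of_add:
  assumes "sets N = sets M" and "A \<in> sets M"
  shows "emeasure (measure_of (space M) (sets M) (\<lambda>A. emeasure M A + emeasure N A)) A
       = emeasure M A + emeasure N A"
proof (rule emeasure_measure_of_sigma[OF sets.sigma_algebra_axioms _ _ assms(2)])
  show "positive (sets M) (\<lambda>A. emeasure M A + emeasure N A)"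
    by (simp add: positive_def)
  show "countably_additive (sets M) (\<lambda>A. emeasure M A + emeasure N A)"
    unfolding countably_additive_def
  proof safe
    fix B :: "nat \<Rightarrow> 'a set" assume B: "range B \<subseteq> sets M" "disjoint_family B"
    have "(\<Sum>i. emeasure M (B i) + emeasure N (B i)) = (\<Sum>i. emeasure M (B i)) + (\<Sum>i. emeasure N (B i))"
      by (rule suminf_add[symmetric]) auto
    also have "\<dots> = emeasure M (\<Union>i. B i) + emeasure N (\<Union>i. B i)"
      using B assms(1) by (simp add: suminf_emeasure)
    finally show "(\<Sum>i. emeasure M (B i) + emeasure N (B i)) = emeasure M (\<Union>i. B i) + emeasure N (\<Union>i. B i)" .
  qed
qed

lemma measure_eqI_Ioc:
  fixes M N :: "real measure"
  assumes sets: "sets M = sets borel" "sets N = sets borel"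
    and fin: "\<And>a b. emeasure M {a<..b} \<noteq> \<infinity>"
    and eq: "\<And>a b. emeasure M {a<..b} = emeasure N {a<..b}"
  shows "M = N"
proof (rule measure_eqI_generator_eq_countable[where E="range (\<lambda>(a, b). {a<..b})" and \<Omega>=UNIV
      and A="range (\<lambda>n::nat. {- real n <.. real n})"])
  show "Int_stable (range (\<lambda>(a, b). {a<..b::real}))"
    unfolding Int_stable_def
  proof safe
    fix a b c d :: real
    have "{a<..b} \<inter> {c<..d} = {max a c <.. min b d}" by auto
    then show "{a<..b} \<inter> {c<..d} \<in> range (\<lambda>(a, b). {a<..b})" by auto
  qed
  show "sets M = sigma_sets UNIV (range (\<lambda>(a, b). {a<..b}))"
    "sets N = sigma_sets UNIV (range (\<lambda>(a, b). {a<..b}))"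
    using sets by (simp_all add: borel_sigma_sets_Ioc)
  show "\<Union> (range (\<lambda>n::nat. {- real n <.. real n})) = UNIV"
  proof safe
    fix x :: real
    obtain n :: nat where "\<bar>x\<bar> < n" using reals_Archimedean2 by blast
    then show "x \<in> \<Union> (range (\<lambda>n::nat. {- real n <.. real n}))" by (auto intro!: exI[of _ n])
  qed auto
qed (use fin eq in auto)

lemma interval_measure_add:
  fixes F G :: "real \<Rightarrow> real"
  assumes mono: "mono F" "mono G"
    and cont: "\<And>a. continuous (at_right a) F" "\<And>a. continuous (at_right a) G"
    and A: "A \<in> sets borel"
  shows "emeasure (interval_measure (\<lambda>x. F x + G x)) A
       = emeasure (interval_measure F) A + emeasure (interval_measure G) A"
proof -
  let ?m = "\<lambda>A. emeasure (interval_measure F) A + emeasure (interval_measure G) A"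
  define \<sigma> where "\<sigma> = measure_of UNIV (sets borel) ?m"
  have em\<sigma>: "emeasure \<sigma> B = ?m B" if "B \<in> sets borel" for B
    using emeasure_measure_of_add[of "interval_measure G" "interval_measure F" B] that
    by (simp add: \<sigma>_def)
  have mono_sum: "mono (\<lambda>x. F x + G x)"
    using mono by (simp add: mono_def add_mono)
  have cont_sum: "continuous (at_right a) (\<lambda>x. F x + G x)" for a
    using cont by (intro continuous_intros)
  have "interval_measure (\<lambda>x. F x + G x) = \<sigma>"
  proof (rule measure_eqI_Ioc)
    show "sets \<sigma> = sets borel"
      unfolding \<sigma>_def by (metis sets.sigma_algebra_axioms sigma_algebra.sets_measure_of_eq space_borel)
    show "emeasure (interval_measure (\<lambda>x. F x + G x)) {a<..b} \<noteq> \<infinity>" for a b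
      by (simp add: emeasure_interval_measure_Ioc_eq[OF monoD[OF mono_sum] cont_sum])
    show "emeasure (interval_measure (\<lambda>x. F x + G x)) {a<..b} = emeasure \<sigma> {a<..b}" for a b
    proof (cases "a \<le> b")
      case True
      have "F a \<le> F b" "G a \<le> G b" using True mono by (auto dest: monoD)
      then have "ennreal (F b + G b - (F a + G a)) = ennreal (F b - F a) + ennreal (G b - G a)"
        by (subst ennreal_plus[symmetric]) (auto simp: algebra_simps)
      then show ?thesis
        using True mono mono_sum cont cont_sum
        by (simp add: em\<sigma> emeasure_interval_measure_Ioc mono_def)
    qed (simp add: em\<sigma>)
  qed simp
  then show ?thesis using em\<sigma>[OF A] by simp
qed

lemma right_difference_quotient_tendsto_ae:
  fixes g H :: "real \<Rightarrow> real"
  assumes int: "\<And>a b. a \<le> b \<Longrightarrow> (g has_integral (H b - H a)) {a..b}"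
  obtains N where "negligible N"
    "\<And>x. x \<notin> N \<Longrightarrow> ((\<lambda>h. (H (x + h) - H x) / h) \<longlongrightarrow> g x) (at_right 0)"
proof -
  have "g integrable_on cbox a b" for a b
    using int[of a b] by (cases "a \<le> b") (auto simp: integrable_on_def)
  then obtain N where N: "negligible N" and lim: "\<And>x e. x \<notin> N \<Longrightarrow> 0 < e \<Longrightarrow>
      \<exists>d>0. \<forall>h. 0 < h \<and> h < d \<longrightarrow> norm (integral (cbox x (x + h *\<^sub>R One)) g /\<^sub>R h ^ DIM(real) - g x) < e"
    by (rule integrable_ccontinuous_explicit) blast
  show ?thesis
  proof (rule that[OF N])
    fix x assume x: "x \<notin> N"
    have quot: "integral (cbox x (x + h *\<^sub>R One)) g /\<^sub>R h ^ DIM(real) = (H (x + h) - H x) / h"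
      if "0 < h" for h
      using int[of x "x + h"] that by (simp add: integral_unique divide_inverse_commute)
    show "((\<lambda>h. (H (x + h) - H x) / h) \<longlongrightarrow> g x) (at_right 0)"
      unfolding tendsto_iff eventually_at_right_field
    proof (intro allI impI)
      fix e :: real assume "0 < e"
      then obtain d where "d > 0" and d: "\<And>h. 0 < h \<Longrightarrow> h < d \<Longrightarrow>
          norm (integral (cbox x (x + h *\<^sub>R One)) g /\<^sub>R h ^ DIM(real) - g x) < e"
        using lim[OF x] by blast
      then show "\<exists>b>0. \<forall>h>0. h < b \<longrightarrow> dist ((H (x + h) - H x) / h) (g x) < e"
        by (metis quot dist_norm)
    qed
  qed
qed

lemma AE_has_real_derivative_of_has_integral:
  fixes g H :: "real \<Rightarrow> real"
  assumes int: "\<And>a b. a \<le> b \<Longrightarrow> (g has_integral (H b - H a)) {a..b}"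
  shows "AE x in lborel. (H has_real_derivative g x) (at x)"
proof -
  obtain N1 where N1: "negligible N1"
    and right: "\<And>x. x \<notin> N1 \<Longrightarrow> ((\<lambda>h. (H (x + h) - H x) / h) \<longlongrightarrow> g x) (at_right 0)"
    using right_difference_quotient_tendsto_ae[OF int] by blast
  have int': "(g \<circ> uminus has_integral ((- H \<circ> uminus) b - (- H \<circ> uminus) a)) {a..b}" if "a \<le> b" for a b
    using int[of "-b" "-a"] that has_integral_reflect_real[of g _ "-a" "-b"] by (simp add: o_def)
  obtain N2 where N2: "negligible N2" and left: "\<And>x. x \<notin> N2 \<Longrightarrow>
      ((\<lambda>h. ((- H \<circ> uminus) (x + h) - (- H \<circ> uminus) x) / h) \<longlongrightarrow> (g \<circ> uminus) x) (at_right 0)"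
    using right_difference_quotient_tendsto_ae[OF int'] by blast
  have "negligible (uminus ` N2)"
    using N2 by (rule negligible_differentiable_image_negligible[rotated])
      (auto intro!: derivative_intros simp: differentiable_on_def)
  with N1 have "negligible (N1 \<union> uminus ` N2)" by (rule negligible_Un)
  then have "AE x in lebesgue. x \<notin> N1 \<union> uminus ` N2"
    unfolding negligible_iff_null_sets by (rule AE_not_in)
  then have "AE x in lborel. x \<notin> N1 \<union> uminus ` N2"
    by (rule AE_completion_iff[THEN iffD1])
  then show ?thesis
  proof eventually_elim
    case (elim x)
    then have "- x \<notin> N2" by (metis UnCI image_eqI minus_minus)
    from left[OF this] have "((\<lambda>h. (H x - H (x - h)) / h) \<longlongrightarrow> g x) (at_right 0)"
      by (simp add: o_def)
    moreover have "(\<lambda>h. (H (x + - h) - H x) / - h) = (\<lambda>h. (H x - H (x - h)) / h)"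
      by (rule ext) (simp add: divide_minus_right minus_divide_left)
    ultimately have "((\<lambda>h. (H (x + h) - H x) / h) \<longlongrightarrow> g x) (at_left 0)"
      unfolding filterlim_at_left_to_right minus_zero by simp
    with right[of x] elim show ?case
      by (simp add: DERIV_def filterlim_at_split)
  qed
qed

lemma continuous_on_nonexpansive:
  fixes H :: "real \<Rightarrow> real"
  assumes "mono H" and "\<And>a b. a \<le> b \<Longrightarrow> H b - H a \<le> b - a"
  shows "continuous_on UNIV H"
proof (rule lipschitz_on_continuous_on[of 1], rule lipschitz_onI)
  fix x y :: real
  show "dist (H x) (H y) \<le> 1 * dist x y"
    using assms monoD[OF assms(1), of x y] monoD[OF assms(1), of y x]
    by (cases "x \<le> y") (auto simp: dist_real_def)
qed simp

lemma absolutely_continuous_interval_measure: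
  fixes H :: "real \<Rightarrow> real"
  assumes mono: "mono H" and lip: "\<And>a b. a \<le> b \<Longrightarrow> H b - H a \<le> b - a"
  shows "absolutely_continuous lborel (interval_measure H)"
  unfolding absolutely_continuous_def
proof
  fix N :: "real set" assume N: "N \<in> null_sets lborel"
  have cont: "continuous (at_right a) f" if "continuous_on UNIV f" for a and f :: "real \<Rightarrow> real"
    using that by (simp add: continuous_on_eq_continuous_at continuous_at_imp_continuous_at_within)
  have "continuous_on UNIV H" by (rule continuous_on_nonexpansive[OF assms])
  then have "continuous_on UNIV (\<lambda>x. x - H x)" by (intro continuous_intros)
  moreover have "mono (\<lambda>x. x - H x)"
    using lip by (auto intro!: monoI simp: algebra_simps)
  ultimately have "emeasure lborel N
      = emeasure (interval_measure H) N + emeasure (interval_measure (\<lambda>x. x - H x)) N"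
    using N mono \<open>continuous_on UNIV H\<close>
    by (subst lborel_eq_real, subst interval_measure_add[symmetric]) (auto intro: cont)
  then have "emeasure (interval_measure H) N = 0"
    using N by (metis add_eq_0_iff_both_eq_0 null_setsD1)
  then show "N \<in> null_sets (interval_measure H)"
    using N by (auto simp: null_sets_def)
qed

lemma interval_measure_density_nonexpansive:
  fixes H :: "real \<Rightarrow> real"
  assumes mono: "mono H" and lip: "\<And>a b. a \<le> b \<Longrightarrow> H b - H a \<le> b - a"
  obtains g where "g \<in> borel_measurable borel"
    "density lborel (\<lambda>x. ennreal (g x)) = interval_measure H"
    "\<And>a b. a \<le> b \<Longrightarrow> (g has_integral (H b - H a)) {a..b}"
proof -
  let ?\<nu> = "interval_measure H"
  have cont: "continuous_on UNIV H" by (rule continuous_on_nonexpansive[OF assms])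
  have ac: "absolutely_continuous lborel ?\<nu>"
    by (rule absolutely_continuous_interval_measure[OF assms])
  have "sigma_finite_measure ?\<nu>"
    using mono cont by (intro sigma_finite_interval_measure)
      (auto simp: mono_def continuous_on_eq_continuous_at continuous_at_imp_continuous_at_within)
  then have "AE x in lborel. RN_deriv lborel ?\<nu> x \<noteq> \<infinity>"
    using ac by (intro sigma_finite_measure.RN_deriv_finite[OF sigma_finite_lborel]) auto
  then have ae: "AE x in lborel. ennreal (enn2real (RN_deriv lborel ?\<nu> x)) = RN_deriv lborel ?\<nu> x"
    by eventually_elim (simp add: less_top)
  define g where "g x = enn2real (RN_deriv lborel ?\<nu> x)" for x
  have g_meas[measurable]: "g \<in> borel_measurable borel"
    unfolding g_def by measurable
  have dens_g: "density lborel (\<lambda>x. ennreal (g x)) = ?\<nu>"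
    using ae sigma_finite_measure.density_RN_deriv[OF sigma_finite_lborel ac]
    unfolding g_def by (subst density_cong) auto
  have int: "(g has_integral (H b - H a)) {a..b}" if "a \<le> b" for a b
  proof -
    have "(\<lambda>x. g x * indicator {a..b} x) \<in> borel_measurable borel"
      by measurable
    moreover have "0 \<le> g x * indicator {a..b} x" for x
      by (simp add: g_def)
    moreover have "(\<integral>\<^sup>+x. ennreal (g x * indicator {a..b} x) \<partial>lborel) = emeasure ?\<nu> {a..b}"
      by (simp flip: dens_g add: emeasure_density nn_integral_set_ennreal)
    then have "(\<integral>\<^sup>+x. ennreal (g x * indicator {a..b} x) \<partial>lborel) = ennreal (H b - H a)"
      using that mono cont by (simp add: emeasure_interval_measure_Icc mono_def)
    moreover have "0 \<le> H b - H a"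
      using monoD[OF mono that] by simp
    ultimately have "((\<lambda>x. g x * indicator {a..b} x) has_integral (H b - H a)) UNIV"
      by (rule nn_integral_has_integral)
    moreover have "(\<lambda>x. g x * indicator {a..b} x) = (\<lambda>x. if x \<in> {a..b} then g x else 0)"
      by (simp add: indicator_times_eq_if)
    ultimately show ?thesis
      using has_integral_restrict_UNIV by metis
  qed
  show ?thesis by (rule that[OF g_meas dens_g int])
qed

text \<open>\<open>deriv H\<close> need not be Borel measurable, so the two densities are compared through their
  defining integrals, which only see \<open>deriv H\<close> almost everywhere.\<close>
lemma density_deriv_eq_interval_measure:
  fixes H :: "real \<Rightarrow> real"
  assumes mono: "mono H" and lip: "\<And>a b. a \<le> b \<Longrightarrow> H b - H a \<le> b - a"
  shows "density lborel (\<lambda>x. ennreal (deriv H x)) = interval_measure H"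
proof -
  obtain g where "g \<in> borel_measurable borel"
    and dens_g: "density lborel (\<lambda>x. ennreal (g x)) = interval_measure H"
    and int: "\<And>a b. a \<le> b \<Longrightarrow> (g has_integral (H b - H a)) {a..b}"
    using interval_measure_density_nonexpansive[OF assms] by blast
  from int have "AE x in lborel. (H has_real_derivative g x) (at x)"
    by (rule AE_has_real_derivative_of_has_integral)
  then have "AE x in lborel. deriv H x = g x"
    by eventually_elim (rule DERIV_imp_deriv)
  then have "(\<integral>\<^sup>+x. ennreal (deriv H x) * indicator A x \<partial>lborel)
      = (\<integral>\<^sup>+x. ennreal (g x) * indicator A x \<partial>lborel)" for A
    by (intro nn_integral_cong_AE) (auto elim: eventually_mono)
  then show ?thesis
    unfolding dens_g[symmetric] density_def by simp
qed

section \<open>Quantiles of push-forwards of Lebesgue-Stieltjes measures\<close>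

lemma filterlim_add_const_at_bot: "filterlim (\<lambda>x. c + x) at_bot (at_bot :: real filter)"
  unfolding filterlim_at_bot eventually_at_bot_linorder by (metis add.commute le_diff_eq)

lemma filterlim_add_const_at_top: "filterlim (\<lambda>x. c + x) at_top (at_top :: real filter)"
  by (rule filterlim_tendsto_add_at_top[OF tendsto_const filterlim_ident])

lemma Sup_eq_of_lessThan_subset:
  fixes a :: real
  assumes "{..<a} \<subseteq> S" and "S \<subseteq> {..a}"
  shows "Sup S = a"
proof (rule cSup_eq)
  show "x \<le> a" if "x \<in> S" for x using assms(2) that by auto
  show "a \<le> y" if "\<And>x. x \<in> S \<Longrightarrow> x \<le> y" for y
    using assms(1) that by (auto intro: dense_le)
qed

lemma emeasure_interval_measure_atMost:
  fixes F :: "real \<Rightarrow> real"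
  assumes mono: "mono F" and cont: "\<And>a. continuous (at_right a) F" and lim: "(F \<longlongrightarrow> 0) at_bot"
  shows "emeasure (interval_measure F) {..b} = ennreal (F b)"
proof -
  have "(\<lambda>n. emeasure (interval_measure F) {b - real n<..b})
      \<longlonglongrightarrow> emeasure (interval_measure F) (\<Union>n. {b - real n<..b})"
    by (rule Lim_emeasure_incseq) (auto simp: incseq_def)
  also have "(\<Union>n. {b - real n<..b}) = {..b}"
  proof (intro equalityI subsetI)
    fix x assume "x \<in> {..b}"
    moreover obtain n :: nat where "b - x < real n" using reals_Archimedean2 by blast
    ultimately show "x \<in> (\<Union>n. {b - real n<..b})" by (auto intro!: exI[of _ n])
  qed auto
  finally have "(\<lambda>n. ennreal (F b - F (b - real n))) \<longlonglongrightarrow> emeasure (interval_measure F) {..b}"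
    using mono cont by (simp add: emeasure_interval_measure_Ioc mono_def)
  moreover have "filterlim (\<lambda>n. b - real n) at_bot sequentially"
    using filterlim_tendsto_add_at_top[OF tendsto_const[of "- b"] filterlim_real_sequentially]
    by (simp add: filterlim_uminus_at_bot)
  then have "(\<lambda>n. ennreal (F b - F (b - real n))) \<longlonglongrightarrow> ennreal (F b - 0)"
    by (intro tendsto_ennrealI tendsto_diff tendsto_const filterlim_compose[OF lim])
  ultimately show ?thesis by (simp add: LIMSEQ_unique)
qed

lemma emeasure_interval_measure_UNIV:
  fixes F :: "real \<Rightarrow> real"
  assumes mono: "mono F" and cont: "\<And>a. continuous (at_right a) F"
    and bot: "(F \<longlongrightarrow> 0) at_bot" and top: "(F \<longlongrightarrow> L) at_top"
  shows "emeasure (interval_measure F) UNIV = ennreal L"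
proof -
  have "(\<lambda>n. emeasure (interval_measure F) {..real n})
      \<longlonglongrightarrow> emeasure (interval_measure F) (\<Union>n. {..real n})"
    by (rule Lim_emeasure_incseq) (auto simp: incseq_def)
  also have "(\<Union>n. {..real n}) = UNIV"
    by (auto intro: real_arch_simple)
  finally have "(\<lambda>n. ennreal (F (real n))) \<longlonglongrightarrow> emeasure (interval_measure F) UNIV"
    by (simp add: emeasure_interval_measure_atMost[OF assms(1-3)])
  moreover have "(\<lambda>n. ennreal (F (real n))) \<longlonglongrightarrow> ennreal L"
    by (intro tendsto_ennrealI filterlim_compose[OF top filterlim_real_sequentially])
  ultimately show ?thesis by (simp add: LIMSEQ_unique)
qed

lemma
  fixes Y :: "real \<Rightarrow> real"
  assumes Y: "Y \<in> borel_measurable borel" "mono Y" and sets: "sets \<nu> = sets borel"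
  shows emeasure_distr_lessThan_le: "x \<le> Y c \<Longrightarrow> emeasure (distr \<nu> borel Y) {..<x} \<le> emeasure \<nu> {..c}"
    and emeasure_distr_lessThan_ge: "Y c < x \<Longrightarrow> emeasure \<nu> {..c} \<le> emeasure (distr \<nu> borel Y) {..<x}"
proof -
  have "Y \<in> borel_measurable \<nu>"
    using Y(1) by (simp only: measurable_cong_sets[OF sets refl])
  then have vimage: "emeasure (distr \<nu> borel Y) {..<x} = emeasure \<nu> (Y -` {..<x})" for x
    using sets_eq_imp_space_eq[OF sets] by (simp add: emeasure_distr)
  have vimage_sets: "Y -` {..<x} \<in> sets \<nu>" for x
    using measurable_sets[OF Y(1), of "{..<x}"] sets by simp
  show "emeasure (distr \<nu> borel Y) {..<x} \<le> emeasure \<nu> {..c}" if "x \<le> Y c"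
  proof -
    have "Y -` {..<x} \<subseteq> {..c}"
    proof
      fix \<xi> assume "\<xi> \<in> Y -` {..<x}"
      then show "\<xi> \<in> {..c}" using that monoD[OF Y(2), of c \<xi>] by (cases "c \<le> \<xi>") auto
    qed
    then show ?thesis unfolding vimage using sets by (intro emeasure_mono) auto
  qed
  show "emeasure \<nu> {..c} \<le> emeasure (distr \<nu> borel Y) {..<x}" if "Y c < x"
  proof -
    have "{..c} \<subseteq> Y -` {..<x}"
      using that monoD[OF Y(2)] by (auto intro: le_less_trans)
    then show ?thesis unfolding vimage using vimage_sets by (rule emeasure_mono)
  qed
qed

lemma nonneg_of_mono_tendsto_at_bot:
  fixes F :: "real \<Rightarrow> real"
  assumes "mono F" and "(F \<longlongrightarrow> 0) at_bot"
  shows "0 \<le> F x"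
proof (rule tendsto_upperbound[OF assms(2)])
  show "\<forall>\<^sub>F y in at_bot. F y \<le> F x"
    using assms(1) by (auto simp: eventually_at_bot_linorder mono_def intro!: exI[of _ x])
qed simp

lemma chi_distr_interval_measure:
  fixes F Y :: "real \<Rightarrow> real"
  assumes mono: "mono F" and cont: "\<And>a. continuous (at_right a) F"
    and bot: "(F \<longlongrightarrow> 0) at_bot" and top: "(F \<longlongrightarrow> L) at_top"
    and Y: "continuous_on UNIV Y" "mono Y"
    and \<xi>: "F \<xi> = \<eta>" "\<And>\<xi>'. \<xi>' < \<xi> \<Longrightarrow> F \<xi>' < \<eta>"
  shows "chi (distr (interval_measure F) borel Y) \<eta> = Y \<xi>"
proof -
  let ?M = "distr (interval_measure F) borel Y"
  have Y_meas: "Y \<in> borel_measurable borel"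
    using Y(1) by (rule borel_measurable_continuous_onI)
  note atMost = emeasure_interval_measure_atMost[OF mono cont bot]
  note le = emeasure_distr_lessThan_le[OF Y_meas Y(2) sets_interval_measure[of F]]
  note ge = emeasure_distr_lessThan_ge[OF Y_meas Y(2) sets_interval_measure[of F]]
  have F_nonneg: "0 \<le> F x" for x
    using mono bot by (rule nonneg_of_mono_tendsto_at_bot)
  have below: "measure ?M {..<x} < \<eta>" if x: "x < Y \<xi>" for x
  proof -
    have "\<forall>\<^sub>F c in at_left \<xi>. x < Y c"
      using x Y(1) by (intro order_tendstoD(1)) (auto simp: continuous_on_def intro: tendsto_within_subset)
    then obtain c where c: "c < \<xi>" "x < Y c"
      by (metis eventually_at_left_field dense)
    then have "emeasure ?M {..<x} \<le> ennreal (F c)"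
      using le[of x c] by (simp add: atMost)
    then have "measure ?M {..<x} \<le> F c"
      by (simp add: measure_def enn2real_leI F_nonneg)
    also have "F c < \<eta>" using \<xi>(2) c(1) .
    finally show ?thesis .
  qed
  have above: "\<eta> \<le> measure ?M {..<x}" if x: "Y \<xi> < x" for x
  proof -
    have "emeasure ?M {..<x} \<le> emeasure ?M UNIV"
      by (rule emeasure_mono) auto
    also have "\<dots> < \<infinity>"
      using emeasure_interval_measure_UNIV[OF mono cont bot top] Y_meas
      by (simp add: emeasure_distr measurable_cong_sets[OF sets_interval_measure refl])
    finally have "enn2real (ennreal \<eta>) \<le> measure ?M {..<x}"
      unfolding measure_def using ge[OF x] \<xi>(1) by (intro enn2real_mono) (auto simp: atMost)
    then show ?thesis
      using \<xi>(1) F_nonneg[of \<xi>] by simp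
  qed
  show ?thesis
    unfolding chi_def
  proof (rule Sup_eq_of_lessThan_subset)
    show "{..<Y \<xi>} \<subseteq> {x. measure ?M {..<x} < \<eta>}" using below by auto
    show "{x. measure ?M {..<x} < \<eta>} \<subseteq> {..Y \<xi>}" using above by (force simp: not_le[symmetric])
  qed
qed

lemma has_integral_square_bound:
  fixes f :: "real \<Rightarrow> real"
  assumes pq: "p \<le> q"
    and I: "(f has_integral I) {p..q}" and J: "((\<lambda>x. (f x)\<^sup>2) has_integral J) {p..q}"
  shows "I\<^sup>2 \<le> (q - p) * J"
proof (cases "p = q")
  case True
  then have "I = 0" using I by (simp add: has_integral_refl(2) has_integral_unique)
  then show ?thesis using True by simp
next
  case False
  with pq have pq': "0 < q - p" by simp
  define m where "m = I / (q - p)"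
  have "((\<lambda>x. (f x)\<^sup>2 - 2 * m * f x + m\<^sup>2) has_integral J - 2 * m * I + (q - p) * m\<^sup>2) {p..q}"
    using pq has_integral_const_real[of "m\<^sup>2" p q]
    by (intro has_integral_add has_integral_diff J has_integral_cmult_real I) auto
  then have "((\<lambda>x. (f x - m)\<^sup>2) has_integral J - 2 * m * I + (q - p) * m\<^sup>2) {p..q}"
    by (simp add: power2_diff algebra_simps)
  then have "0 \<le> J - 2 * m * I + (q - p) * m\<^sup>2"
    by (rule has_integral_nonneg) simp
  then have "0 \<le> (q - p) * (J - 2 * m * I + (q - p) * m\<^sup>2)"
    using pq' by simp
  also have "\<dots> = (q - p) * J - 2 * (m * (q - p)) * I + (m * (q - p))\<^sup>2"
    by (simp add: power2_eq_square algebra_simps)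
  also have "m * (q - p) = I"
    using pq' by (simp add: m_def)
  finally show ?thesis by (simp add: power2_eq_square)
qed

lemma ac_part_density_le:
  assumes "ac_part_density \<mu> g" "sets \<mu> = sets borel" "A \<in> sets borel"
  shows "(\<integral>\<^sup>+x\<in>A. ennreal (g x) \<partial>lborel) \<le> emeasure \<mu> A"
proof -
  obtain N where "N \<in> sets borel" and N: "\<And>A. A \<in> sets borel \<Longrightarrow>
      emeasure \<mu> (A - N) = (\<integral>\<^sup>+x\<in>A. ennreal (g x) \<partial>lborel)"
    using assms(1) by (auto simp: ac_part_density_def)
  then have "(\<integral>\<^sup>+x\<in>A. ennreal (g x) \<partial>lborel) = emeasure \<mu> (A - N)"
    using assms(3) by simp
  also have "\<dots> \<le> emeasure \<mu> A"
    using assms(2,3) by (intro emeasure_mono) auto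
  finally show ?thesis .
qed

lemma borel_measurable_restrict_Icc_of_Ioo:
  fixes f :: "real \<Rightarrow> real"
  assumes f: "f \<in> borel_measurable (restrict_space borel {a<..<b})"
  shows "f \<in> borel_measurable (restrict_space lborel {a..b})"
proof (rule measurable_discrete_difference)
  have "(\<lambda>x. if x \<in> {a<..<b} then f x else 0) \<in> borel_measurable borel"
    using f by (subst measurable_restrict_space_iff[symmetric]) auto
  then show "(\<lambda>x. if x \<in> {a<..<b} then f x else 0) \<in> borel_measurable (restrict_space lborel {a..b})"
    by (intro measurable_restrict_space1) simp
  show "countable ({a, b} \<inter> {a..b})" by simp
  show "{x} \<in> sets (restrict_space lborel {a..b})" if "x \<in> {a, b} \<inter> {a..b}" for x
    using that by (subst sets_restrict_space_iff) auto
qed (auto simp: space_restrict_space)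

lemma AE_unit_interval_interior: "AE s in restrict_space lborel {0..1::real}. s \<in> {0<..<1}"
proof -
  have "{0..1::real} \<inter> space lborel \<in> sets lborel" by simp
  then show ?thesis
    unfolding AE_restrict_space_iff[OF \<open>{0..1::real} \<inter> space lborel \<in> sets lborel\<close>]
    using AE_lborel_singleton[of 0] AE_lborel_singleton[of 1] by eventually_elim auto
qed

lemma esssup_nonneg:
  fixes f :: "'a \<Rightarrow> real"
  assumes "\<And>x. 0 \<le> f x" and "emeasure M (space M) \<noteq> 0"
  shows "0 \<le> esssup M (\<lambda>x. ereal (f x))"
proof (rule ccontr)
  assume neg: "\<not> 0 \<le> esssup M (\<lambda>x. ereal (f x))"
  have "AE x in M. ereal (f x) \<le> esssup M (\<lambda>x. ereal (f x))" by (rule esssup_AE)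
  then have "AE x in M. False"
  proof eventually_elim
    case (elim x)
    then show False using assms(1)[of x] neg by (meson ereal_less_eq(5) order_trans)
  qed
  then have "ae_filter M = bot" by (simp add: trivial_limit_def)
  with assms(2) show False by (simp add: ae_filter_eq_bot_iff)
qed

lemma nn_integral_unit_interval_le_add_const:
  fixes b b' :: "real \<Rightarrow> real"
  assumes meas: "b \<in> borel_measurable (restrict_space lborel {0..1})"
    and nonneg: "\<And>s. 0 \<le> b s" "0 \<le> K"
    and le: "AE s in restrict_space lborel {0..1}. b' s \<le> b s + K"
  shows "(\<integral>\<^sup>+ s\<in>{0..1}. ennreal (b' s) \<partial>lborel) \<le> (\<integral>\<^sup>+ s\<in>{0..1}. ennreal (b s) \<partial>lborel) + ennreal K"
proof -
  let ?N = "restrict_space lborel {0..1::real}"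
  have integral_N: "(\<integral>\<^sup>+ s\<in>{0..1}. f s \<partial>lborel) = (\<integral>\<^sup>+ s. f s \<partial>?N)" for f
    by (simp add: nn_integral_restrict_space)
  from le have "AE s in ?N. ennreal (b' s) \<le> ennreal (b s) + ennreal K"
  proof eventually_elim
    case (elim s)
    then have "ennreal (b' s) \<le> ennreal (b s + K)" by (rule ennreal_leI)
    then show ?case using nonneg(1)[of s] nonneg(2) by (simp add: ennreal_plus)
  qed
  then have "(\<integral>\<^sup>+ s. ennreal (b' s) \<partial>?N) \<le> (\<integral>\<^sup>+ s. (ennreal (b s) + ennreal K) \<partial>?N)"
    by (rule nn_integral_mono_AE)
  also have "\<dots> = (\<integral>\<^sup>+ s. ennreal (b s) \<partial>?N) + ennreal K"
    using meas by (simp add: nn_integral_add emeasure_restrict_space space_restrict_space)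
  finally show ?thesis by (simp add: integral_N)
qed

lemma distance_coefficient_bound:
  fixes e b c t :: real
  assumes "0 \<le> e" "0 \<le> b" "0 \<le> c" "0 \<le> t"
  shows "(e + t / 4 * c) + (b + t * e + t\<^sup>2 / 8 * c) + c \<le> (1 + t + t\<^sup>2 / 8) * (e + b + c)"
proof -
  have "(1 + t + t\<^sup>2 / 8) * (e + b + c) - ((e + t / 4 * c) + (b + t * e + t\<^sup>2 / 8 * c) + c)
      = t * b + 3 / 4 * (t * c) + t\<^sup>2 / 8 * e + t\<^sup>2 / 8 * b"
    by (simp add: algebra_simps power2_eq_square)
  moreover have "0 \<le> t * b" "0 \<le> t * c" "0 \<le> t\<^sup>2 * e" "0 \<le> t\<^sup>2 * b"
    using assms by simp_all
  ultimately show ?thesis by linarith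
qed

lemma esssup_integral_estimate:
  fixes a b a' b' :: "real \<Rightarrow> real" and t c :: real
  defines "N \<equiv> restrict_space lborel {0..1::real}"
  assumes t: "0 \<le> t" and c: "0 \<le> c"
    and nonneg: "\<And>s. 0 \<le> a s" "\<And>s. 0 \<le> b s"
    and meas: "a' \<in> borel_measurable N" "b \<in> borel_measurable N"
    and a': "\<And>s. s \<in> {0<..<1} \<Longrightarrow> a' s \<le> a s + t / 4 * c"
    and b': "\<And>s. s \<in> {0<..<1} \<Longrightarrow> b' s \<le> b s + t * a s + t\<^sup>2 / 8 * c"
  shows "esssup N (\<lambda>s. ereal (a' s)) + enn2ereal (\<integral>\<^sup>+ s\<in>{0..1}. ennreal (b' s) \<partial>lborel) + ereal c
     \<le> ereal (1 + t + t\<^sup>2 / 8)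
        * (esssup N (\<lambda>s. ereal (a s)) + enn2ereal (\<integral>\<^sup>+ s\<in>{0..1}. ennreal (b s) \<partial>lborel) + ereal c)"
    (is "?L \<le> ?k * (?E + enn2ereal ?B + _)")
proof -
  have "emeasure N (space N) = 1"
    by (simp add: N_def emeasure_restrict_space space_restrict_space)
  then have E_nonneg: "0 \<le> ?E"
    using nonneg(1) by (intro esssup_nonneg) auto
  show ?thesis
  proof (cases "?E = \<infinity> \<or> ?B = \<infinity>")
    case True
    moreover have "0 < 1 + t + t\<^sup>2 / 8" using t by (simp add: add_pos_nonneg)
    ultimately have "\<infinity> = ?k * (?E + enn2ereal ?B + ereal c)"
      using E_nonneg by auto
    then show ?thesis using ereal_less_eq(1)[of ?L] by argo
  next
    case False
    then obtain e where e: "?E = ereal e" using E_nonneg by (cases ?E) auto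
    then have e_nonneg: "0 \<le> e" using E_nonneg by simp
    obtain bv where bv: "?B = ennreal bv" "0 \<le> bv"
      using False by (cases ?B) auto
    have AE_a: "AE s in N. s \<in> {0<..<1} \<and> a s \<le> e"
      using AE_unit_interval_interior[folded N_def] esssup_AE[of "\<lambda>s. ereal (a s)" N]
      by eventually_elim (simp add: e)
    have "esssup N (\<lambda>s. ereal (a' s)) \<le> ereal (e + t / 4 * c)"
    proof (rule esssup_I)
      show "(\<lambda>s. ereal (a' s)) \<in> borel_measurable N" using meas(1) by measurable
      show "AE s in N. ereal (a' s) \<le> ereal (e + t / 4 * c)"
        using AE_a
      proof eventually_elim
        case (elim s)
        then have "a' s \<le> e + t / 4 * c" using a'[of s] by linarith
        then show ?case by simp
      qed
    qed
    moreover have "(\<integral>\<^sup>+ s\<in>{0..1}. ennreal (b' s) \<partial>lborel) \<le> ennreal (bv + (t * e + t\<^sup>2 / 8 * c))"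
    proof -
      have "AE s in N. b' s \<le> b s + (t * e + t\<^sup>2 / 8 * c)"
        using AE_a
      proof eventually_elim
        case (elim s)
        then have "t * a s \<le> t * e" using t by (simp add: mult_left_mono)
        then show ?case using b'[of s] elim by linarith
      qed
      then have "(\<integral>\<^sup>+ s\<in>{0..1}. ennreal (b' s) \<partial>lborel) \<le> ?B + ennreal (t * e + t\<^sup>2 / 8 * c)"
        using meas(2) nonneg(2) t e_nonneg c unfolding N_def
        by (intro nn_integral_unit_interval_le_add_const) auto
      then show ?thesis using bv t e_nonneg c by (simp add: ennreal_plus)
    qed
    then have "enn2ereal (\<integral>\<^sup>+ s\<in>{0..1}. ennreal (b' s) \<partial>lborel) \<le> ereal (bv + (t * e + t\<^sup>2 / 8 * c))"
      using bv t e_nonneg c by (metis enn2ereal_ennreal add_nonneg_nonneg less_eq_ennreal.rep_eq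
          mult_nonneg_nonneg zero_le_power2 divide_nonneg_pos zero_less_numeral)
    ultimately have "?L \<le> ereal (e + t / 4 * c) + ereal (bv + (t * e + t\<^sup>2 / 8 * c)) + ereal c"
      by (intro add_mono order_refl)
    also have "\<dots> \<le> ?k * (?E + enn2ereal ?B + ereal c)"
      using distance_coefficient_bound[OF e_nonneg bv(2) c t] bv by (simp add: e)
    finally show ?thesis .
  qed
qed

lemma abs_centered_shift_diff_le:
  fixes s t C1 C2 A1 A2 :: real
  assumes "0 \<le> t" "0 < s" "s < 1"
  shows "\<bar>(C1 * s - C1 / 2) * t - (C2 * s - C2 / 2) * t + (A1 - A2)\<bar> \<le> \<bar>A1 - A2\<bar> + t / 2 * \<bar>C1 - C2\<bar>"
proof -
  have "(C1 * s - C1 / 2) * t - (C2 * s - C2 / 2) * t = t * (C1 - C2) * (s - 1 / 2)"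
    by (simp add: algebra_simps)
  then have "\<bar>(C1 * s - C1 / 2) * t - (C2 * s - C2 / 2) * t\<bar> = t * \<bar>C1 - C2\<bar> * \<bar>s - 1 / 2\<bar>"
    using assms(1) by (simp add: abs_mult)
  also have "\<dots> \<le> t * \<bar>C1 - C2\<bar> * (1 / 2)"
  proof (rule mult_left_mono)
    show "\<bar>s - 1 / 2\<bar> \<le> 1 / 2" using assms unfolding abs_le_iff by linarith
  qed (use assms in simp)
  finally show ?thesis by linarith
qed

lemma inverse_Suc_less: "0 < d \<Longrightarrow> \<exists>n. 1 / real (Suc n) < d"
  using reals_Archimedean[of d] by (auto simp: inverse_eq_divide)

section \<open>Lagrangian coordinates of the initial measure\<close>

locale HS_measure =
  fixes \<mu> :: "real measure"
  assumes finite_borel: "finite_borel_measure \<mu>" and total_pos: "Ctot \<mu> > 0"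
begin

abbreviation "C \<equiv> Ctot \<mu>"
abbreviation "F \<equiv> F0 \<mu>"
abbreviation "y0 \<equiv> ybar0 \<mu>"
abbreviation "H \<equiv> Hbar0 \<mu>"

lemma sets_eq_borel [simp, measurable_cong]: "sets \<mu> = sets borel"
  using finite_borel by (simp add: finite_borel_measure_def)

sublocale finite_measure \<mu>
  using finite_borel by (simp add: finite_borel_measure_def)

lemma F_mono: "x \<le> y \<Longrightarrow> F x \<le> F y"
  unfolding F0_def by (intro finite_measure_mono) auto

lemma F_nonneg: "0 \<le> F x"
  by (simp add: F0_def)

lemma F_le_total: "F x \<le> C"
  unfolding F0_def Ctot_def by (intro finite_measure_mono) auto

lemma F_left_limit: "(\<lambda>n. F (a - 1 / real (Suc n))) \<longlonglongrightarrow> F a"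
proof -
  have "(\<lambda>n. F (a - 1 / real (Suc n))) \<longlonglongrightarrow> measure \<mu> (\<Union>n. {..< a - 1 / real (Suc n)})"
    unfolding F0_def
    by (rule finite_Lim_measure_incseq) (auto simp: incseq_def frac_le intro: less_le_trans)
  also have "(\<Union>n. {..< a - 1 / real (Suc n)}) = {..<a}"
  proof (intro equalityI subsetI)
    fix x assume "x \<in> {..<a}"
    then obtain n where "1 / real (Suc n) < a - x" using inverse_Suc_less[of "a - x"] by auto
    then show "x \<in> (\<Union>n. {..< a - 1 / real (Suc n)})" by (auto intro!: exI[of _ n])
  qed (auto intro: less_le_trans)
  finally show ?thesis by (simp add: F0_def)
qed

lemma F_right_limit: "(\<lambda>n. F (a + 1 / real (Suc n))) \<longlonglongrightarrow> measure \<mu> {..a}"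
proof -
  have "(\<lambda>n. F (a + 1 / real (Suc n))) \<longlonglongrightarrow> measure \<mu> (\<Inter>n. {..< a + 1 / real (Suc n)})"
    unfolding F0_def
    by (rule finite_Lim_measure_decseq) (auto simp: decseq_def frac_le intro: less_le_trans)
  also have "(\<Inter>n. {..< a + 1 / real (Suc n)}) = {..a}"
  proof (intro equalityI subsetI)
    fix x assume x: "x \<in> (\<Inter>n. {..< a + 1 / real (Suc n)})"
    show "x \<in> {..a}"
    proof (rule ccontr)
      assume "x \<notin> {..a}"
      then obtain n where "1 / real (Suc n) < x - a" using inverse_Suc_less[of "x - a"] by auto
      moreover have "x < a + 1 / real (Suc n)" using x by blast
      ultimately show False by linarith
    qed
  qed (auto intro: le_less_trans)
  finally show ?thesis by (simp add: F0_def)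
qed

lemma F_tendsto_at_top: "(F \<longlongrightarrow> C) at_top"
proof (rule tendsto_at_topI_sequentially_real)
  show "mono F" by (simp add: F_mono monoI)
  have "(\<lambda>n. F (real n)) \<longlonglongrightarrow> measure \<mu> (\<Union>n. {..<real n})"
    unfolding F0_def by (rule finite_Lim_measure_incseq) (auto simp: incseq_def)
  also have "(\<Union>n. {..<real n}) = UNIV"
    by (auto intro: reals_Archimedean2)
  finally show "(\<lambda>n. F (real n)) \<longlonglongrightarrow> C" by (simp add: Ctot_def)
qed

lemma F_tendsto_at_bot: "(F \<longlongrightarrow> 0) at_bot"
proof -
  have "(\<lambda>n. F (- real n)) \<longlonglongrightarrow> measure \<mu> (\<Inter>n. {..< - real n})"
    unfolding F0_def by (rule finite_Lim_measure_decseq) (auto simp: decseq_def)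
  also have "(\<Inter>n. {..< - real n}) = {}"
  proof safe
    fix x assume x: "x \<in> (\<Inter>n. {..< - real n})"
    obtain n :: nat where "- x < real n" using reals_Archimedean2 by blast
    moreover have "x < - real n" using x by blast
    ultimately show "x \<in> {}" by linarith
  qed
  finally have "((\<lambda>x. - F (- x)) \<longlongrightarrow> 0) at_top"
    by (intro tendsto_at_topI_sequentially_real monoI)
       (auto simp: F_mono tendsto_minus_cancel_left[symmetric])
  from filterlim_compose[OF this filterlim_uminus_at_top_at_bot] show ?thesis
    by (simp add: tendsto_minus_cancel_left[symmetric])
qed

text \<open>\<open>y0\<close> is the generalized inverse of the initial Lagrangian map \<open>\<Phi> x = x + F x\<close>.\<close>
lemma Phi_sublevel_le: "x + F x < \<xi> \<Longrightarrow> x \<le> \<xi>"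
  using F_nonneg[of x] by simp

lemma Phi_sublevel_bdd: "bdd_above {x. x + F x < \<xi>}"
  by (rule bdd_aboveI[of _ \<xi>]) (simp add: Phi_sublevel_le)

lemma Phi_sublevel_nonempty: "{x. x + F x < \<xi>} \<noteq> {}"
  using F_le_total[of "\<xi> - C - 1"] by (auto intro!: exI[of _ "\<xi> - C - 1"])

lemma y0_upper: "x + F x < \<xi> \<Longrightarrow> x \<le> y0 \<xi>"
  unfolding ybar0_def by (rule cSup_upper) (use Phi_sublevel_bdd in auto)

lemma less_y0:
  assumes "x < y0 \<xi>"
  shows "x + F x < \<xi>"
proof -
  obtain x' where "x' + F x' < \<xi>" "x < x'"
    using less_cSupE[OF assms[unfolded ybar0_def] Phi_sublevel_nonempty] by blast
  then show ?thesis using F_mono[of x x'] by simp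
qed

lemma y0_less: "y0 \<xi> < x \<Longrightarrow> \<xi> \<le> x + F x"
  using y0_upper[of x \<xi>] by linarith

lemma y0_le: "y0 \<xi> \<le> \<xi>"
  unfolding ybar0_def
proof (rule cSup_least)
  show "{x. x + F x < \<xi>} \<noteq> {}" by (rule Phi_sublevel_nonempty)
qed (simp add: Phi_sublevel_le)

lemma y0_ge: "\<xi> - C \<le> y0 \<xi>"
proof (rule ccontr)
  assume "\<not> \<xi> - C \<le> y0 \<xi>"
  moreover define x where "x = (y0 \<xi> + (\<xi> - C)) / 2"
  ultimately have "y0 \<xi> < x" "x < \<xi> - C" by simp_all
  then have "x + F x < \<xi>" using F_le_total[of x] by linarith
  with \<open>y0 \<xi> < x\<close> show False using y0_upper[of x \<xi>] by simp
qed

lemma y0_mono: "\<xi>1 \<le> \<xi>2 \<Longrightarrow> y0 \<xi>1 \<le> y0 \<xi>2"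
  unfolding ybar0_def
  by (rule cSup_subset_mono) (use Phi_sublevel_nonempty Phi_sublevel_bdd in auto)

text \<open>Between \<open>y0 \<xi>1\<close> and \<open>y0 \<xi>2\<close> the function \<open>x + F x\<close> increases by at least
  \<open>y0 \<xi>2 - y0 \<xi>1\<close>, while it stays between \<open>\<xi>1\<close> and \<open>\<xi>2\<close>.\<close>
lemma y0_nonexpansive: "\<xi>1 \<le> \<xi>2 \<Longrightarrow> y0 \<xi>2 - y0 \<xi>1 \<le> \<xi>2 - \<xi>1"
proof (rule ccontr)
  assume le: "\<xi>1 \<le> \<xi>2" and "\<not> y0 \<xi>2 - y0 \<xi>1 \<le> \<xi>2 - \<xi>1"
  define e where "e = (y0 \<xi>2 - y0 \<xi>1 - (\<xi>2 - \<xi>1)) / 3"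
  have e: "e > 0" "3 * e = y0 \<xi>2 - y0 \<xi>1 - (\<xi>2 - \<xi>1)"
    using \<open>\<not> y0 \<xi>2 - y0 \<xi>1 \<le> \<xi>2 - \<xi>1\<close> by (simp_all add: e_def)
  have "\<xi>1 \<le> (y0 \<xi>1 + e) + F (y0 \<xi>1 + e)" using e by (intro y0_less) simp
  moreover have "(y0 \<xi>2 - e) + F (y0 \<xi>2 - e) < \<xi>2" using e by (intro less_y0) simp
  moreover have "F (y0 \<xi>1 + e) \<le> F (y0 \<xi>2 - e)"
    using e le by (intro F_mono[of "y0 \<xi>1 + e" "y0 \<xi>2 - e"]) linarith
  ultimately show False using e by linarith
qed

lemma H_mono: "mono H"
proof (rule monoI)
  show "H \<xi>1 \<le> H \<xi>2" if "\<xi>1 \<le> \<xi>2" for \<xi>1 \<xi>2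
    using y0_nonexpansive[OF that] by (simp add: Hbar0_def)
qed

lemma H_nonexpansive: "\<xi>1 \<le> \<xi>2 \<Longrightarrow> H \<xi>2 - H \<xi>1 \<le> \<xi>2 - \<xi>1"
  using y0_mono[of \<xi>1 \<xi>2] by (simp add: Hbar0_def)

lemma H_continuous: "continuous_on UNIV H"
  by (rule continuous_on_nonexpansive[OF H_mono H_nonexpansive])

lemma y0_continuous: "continuous_on UNIV y0"
proof -
  have "continuous_on UNIV (\<lambda>\<xi>. \<xi> - H \<xi>)" by (intro continuous_intros H_continuous)
  then show ?thesis by (simp add: Hbar0_def)
qed

lemma F_y0_le_H: "F (y0 \<xi>) \<le> H \<xi>"
proof -
  have "(\<lambda>n. \<xi> - (y0 \<xi> - 1 / real (Suc n))) \<longlonglongrightarrow> \<xi> - (y0 \<xi> - 0)"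
    by (intro tendsto_intros LIMSEQ_Suc[OF lim_inverse_n'])
  moreover have "F (y0 \<xi> - 1 / real (Suc n)) \<le> \<xi> - (y0 \<xi> - 1 / real (Suc n))" for n
    using less_y0[of "y0 \<xi> - 1 / real (Suc n)" \<xi>] by simp
  ultimately show ?thesis
    by (intro LIMSEQ_le[OF F_left_limit]) (auto simp: Hbar0_def)
qed

lemma H_le_measure_atMost_y0: "H \<xi> \<le> measure \<mu> {..y0 \<xi>}"
proof -
  have "(\<lambda>n. \<xi> - (y0 \<xi> + 1 / real (Suc n))) \<longlonglongrightarrow> \<xi> - (y0 \<xi> + 0)"
    by (intro tendsto_intros LIMSEQ_Suc[OF lim_inverse_n'])
  moreover have "\<xi> - (y0 \<xi> + 1 / real (Suc n)) \<le> F (y0 \<xi> + 1 / real (Suc n))" for n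
    using y0_less[of \<xi> "y0 \<xi> + 1 / real (Suc n)"] by simp
  ultimately show ?thesis
    by (intro LIMSEQ_le[OF _ F_right_limit]) (auto simp: Hbar0_def)
qed

lemma y0_Phi: "y0 (x + F x) = x"
proof -
  have "{x'. x' + F x' < x + F x} = {..<x}"
  proof safe
    fix x' assume "x' + F x' < x + F x"
    then show "x' < x" using F_mono[of x x'] by (cases "x \<le> x'") auto
  next
    fix x' assume "x' < x"
    then show "x' + F x' < x + F x" using F_mono[of x' x] by simp
  qed
  then show ?thesis by (simp add: ybar0_def)
qed

lemma H_Phi: "H (x + F x) = F x"
  using y0_Phi[of x] by (simp add: Hbar0_def)

lemma H_tendsto_at_bot: "(H \<longlongrightarrow> 0) at_bot"
proof (rule tendsto_sandwich)
  show "\<forall>\<^sub>F \<xi> in at_bot. 0 \<le> H \<xi>"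
    using y0_le by (simp add: Hbar0_def)
  show "\<forall>\<^sub>F \<xi> in at_bot. H \<xi> \<le> F (1 + \<xi>)"
  proof (intro always_eventually allI)
    fix \<xi>
    have "H \<xi> \<le> measure \<mu> {..<y0 \<xi> + 1}"
      using H_le_measure_atMost_y0[of \<xi>] by (rule order_trans) (intro finite_measure_mono, auto)
    also have "\<dots> \<le> F (1 + \<xi>)"
      using F_mono[of "y0 \<xi> + 1" "1 + \<xi>"] y0_le[of \<xi>] by (simp add: F0_def)
    finally show "H \<xi> \<le> F (1 + \<xi>)" .
  qed
  show "((\<lambda>\<xi>. F (1 + \<xi>)) \<longlongrightarrow> 0) at_bot"
    by (rule filterlim_compose[OF F_tendsto_at_bot filterlim_add_const_at_bot])
qed simp

lemma H_tendsto_at_top: "(H \<longlongrightarrow> C) at_top"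
proof (rule tendsto_sandwich)
  show "\<forall>\<^sub>F \<xi> in at_top. F (- C + \<xi>) \<le> H \<xi>"
  proof (intro always_eventually allI)
    show "F (- C + \<xi>) \<le> H \<xi>" for \<xi>
      using F_mono[of "- C + \<xi>" "y0 \<xi>"] y0_ge[of \<xi>] F_y0_le_H[of \<xi>] by linarith
  qed
  show "\<forall>\<^sub>F \<xi> in at_top. H \<xi> \<le> C"
    using y0_ge by (simp add: Hbar0_def algebra_simps)
  show "((\<lambda>\<xi>. F (- C + \<xi>)) \<longlongrightarrow> C) at_top"
    by (rule filterlim_compose[OF F_tendsto_at_top filterlim_add_const_at_top])
qed simp

text \<open>Since \<open>H\<close> does not depend on
  time, \<open>Y t (Xi \<eta>)\<close> is the \<open>\<eta>\<close>-quantile \<open>chi\<close> of \<open>\<mu>(t)\<close> for every \<open>t\<close>.\<close>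
definition Xi :: "real \<Rightarrow> real" where
  "Xi \<eta> = Inf {\<xi>. \<eta> \<le> H \<xi>}"

lemma H_superlevel_nonempty:
  assumes "\<eta> < C"
  shows "{\<xi>. \<eta> \<le> H \<xi>} \<noteq> {}"
proof -
  have "\<forall>\<^sub>F \<xi> in at_top. \<eta> < H \<xi>"
    using assms by (rule order_tendstoD(1)[OF H_tendsto_at_top])
  then obtain \<xi>1 where "\<forall>\<xi>\<ge>\<xi>1. \<eta> < H \<xi>"
    unfolding eventually_at_top_linorder by blast
  then have "\<xi>1 \<in> {\<xi>. \<eta> \<le> H \<xi>}" by (simp add: less_imp_le)
  then show ?thesis by blast
qed

lemma H_superlevel_bdd_below:
  assumes "0 < \<eta>"
  shows "bdd_below {\<xi>. \<eta> \<le> H \<xi>}"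
proof -
  have "\<forall>\<^sub>F \<xi> in at_bot. H \<xi> < \<eta>"
    using assms by (rule order_tendstoD(2)[OF H_tendsto_at_bot])
  then obtain \<xi>0 where "\<forall>\<xi>\<le>\<xi>0. H \<xi> < \<eta>"
    unfolding eventually_at_bot_linorder by blast
  then have \<xi>0: "H \<xi>0 < \<eta>" by simp
  show ?thesis
  proof (rule bdd_belowI)
    fix \<xi> assume "\<xi> \<in> {\<xi>. \<eta> \<le> H \<xi>}"
    then show "\<xi>0 \<le> \<xi>"
      using \<xi>0 monoD[OF H_mono, of \<xi> \<xi>0] by (cases "\<xi> \<le> \<xi>0") auto
  qed
qed

lemma
  assumes "0 < \<eta>" "\<eta> < C"
  shows H_Xi: "H (Xi \<eta>) = \<eta>" and H_less_before_Xi: "\<xi> < Xi \<eta> \<Longrightarrow> H \<xi> < \<eta>"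
proof -
  note bdd = H_superlevel_bdd_below[OF assms(1)]
  have "closed {\<xi>. \<eta> \<le> H \<xi>}"
    by (rule closed_Collect_le[OF continuous_on_const H_continuous])
  then have mem: "\<eta> \<le> H (Xi \<eta>)"
    using closed_contains_Inf[OF H_superlevel_nonempty[OF assms(2)] bdd] by (simp add: Xi_def)
  show below: "H \<xi> < \<eta>" if "\<xi> < Xi \<eta>" for \<xi>
  proof (rule ccontr)
    assume "\<not> H \<xi> < \<eta>"
    then have "Xi \<eta> \<le> \<xi>" unfolding Xi_def by (intro cInf_lower[OF _ bdd]) simp
    with that show False by simp
  qed
  have "isCont H (Xi \<eta>)"
    using H_continuous by (simp add: continuous_on_eq_continuous_at)
  then have "(H \<longlongrightarrow> H (Xi \<eta>)) (at_left (Xi \<eta>))"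
    by (simp add: isCont_def filterlim_at_split)
  moreover have "\<forall>\<^sub>F \<xi> in at_left (Xi \<eta>). H \<xi> \<le> \<eta>"
  proof -
    have "\<forall>\<xi>>Xi \<eta> - 1. \<xi> < Xi \<eta> \<longrightarrow> H \<xi> \<le> \<eta>"
      using below by (simp add: less_imp_le)
    then show ?thesis
      unfolding eventually_at_left_field by (intro exI[of _ "Xi \<eta> - 1"]) simp
  qed
  ultimately have "H (Xi \<eta>) \<le> \<eta>"
    by (rule tendsto_upperbound) simp
  with mem show "H (Xi \<eta>) = \<eta>" by simp
qed

lemma Xi_mono:
  assumes "0 < \<eta>1" "\<eta>1 \<le> \<eta>2" "\<eta>2 < C"
  shows "Xi \<eta>1 \<le> Xi \<eta>2"
proof (rule ccontr)
  assume "\<not> Xi \<eta>1 \<le> Xi \<eta>2"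
  then have "H (Xi \<eta>2) < \<eta>1" using assms by (intro H_less_before_Xi) auto
  moreover have "H (Xi \<eta>2) = \<eta>2" using assms by (intro H_Xi) auto
  ultimately show False using assms by simp
qed

lemma chi_eq_y0_Xi:
  assumes "0 < \<eta>" "\<eta> < C"
  shows "chi \<mu> \<eta> = y0 (Xi \<eta>)"
proof -
  have iff: "F x < \<eta> \<longleftrightarrow> x + F x < Xi \<eta>" for x
  proof
    assume "F x < \<eta>"
    then have "H (x + F x) < H (Xi \<eta>)" using H_Phi[of x] H_Xi[OF assms] by linarith
    then show "x + F x < Xi \<eta>" using monoD[OF H_mono, of "Xi \<eta>" "x + F x"] by linarith
  next
    assume "x + F x < Xi \<eta>"
    from H_less_before_Xi[OF assms this] show "F x < \<eta>" using H_Phi[of x] by linarith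
  qed
  have "{x. measure \<mu> {..<x} < \<eta>} = {x. x + F x < Xi \<eta>}"
    using iff unfolding F0_def by blast
  then show ?thesis unfolding chi_def ybar0_def by simp
qed

end

section \<open>The conservative solution in Lagrangian coordinates\<close>

locale HS_datum = HS_measure +
  fixes u u' :: "real \<Rightarrow> real"
  assumes H1: "H1_with_deriv u u'" and ac: "ac_part_density \<mu> (\<lambda>x. (u' x)\<^sup>2)"
begin

lemma u_has_integral: "a \<le> b \<Longrightarrow> (u' has_integral (u b - u a)) {a..b}"
  using H1 by (simp add: H1_with_deriv_def)

lemma u_continuous: "continuous_on UNIV u"
proof (rule continuous_at_imp_continuous_on, intro ballI)
  fix x :: real
  have "u' integrable_on {x - 1..x + 1}"
    using u_has_integral[of "x - 1" "x + 1"] by (auto simp: integrable_on_def)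
  then have "continuous_on {x - 1..x + 1} (\<lambda>y. u (x - 1) + integral {x - 1..y} u')"
    by (intro continuous_intros indefinite_integral_continuous_1)
  moreover have "u (x - 1) + integral {x - 1..y} u' = u y" if "y \<in> {x - 1..x + 1}" for y
    using u_has_integral[of "x - 1" y] that by (simp add: integral_unique)
  ultimately have "continuous_on {x - 1..x + 1} u"
    by (rule continuous_on_eq)
  then show "isCont u x"
    by (rule continuous_on_interior) simp
qed

text \<open>Cauchy-Schwarz, together with the fact that \<open>u'\<^sup>2 dx\<close> is only the absolutely continuous
  part of \<open>\<mu>\<close>.\<close>
lemma u_increment_square: 
  assumes "p \<le> q"
  shows "(u q - u p)\<^sup>2 \<le> (q - p) * measure \<mu> {p<..<q}"
proof -
  have "set_integrable lborel {p..q} (\<lambda>x. (u' x)\<^sup>2)"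
    using H1 unfolding set_integrable_def H1_with_deriv_def
    by (intro integrable_mult_indicator) auto
  then have J: "((\<lambda>x. (u' x)\<^sup>2) has_integral integral {p..q} (\<lambda>x. (u' x)\<^sup>2)) {p..q}"
    by (simp add: set_borel_integral_eq_integral(1) integrable_integral)
  have "ennreal (integral {p..q} (\<lambda>x. (u' x)\<^sup>2)) = (\<integral>\<^sup>+x\<in>{p..q}. ennreal ((u' x)\<^sup>2) \<partial>lborel)"
    by (rule nn_integral_has_integral_lebesgue'[OF _ J, symmetric]) simp
  also have "\<dots> = (\<integral>\<^sup>+x\<in>{p<..<q}. ennreal ((u' x)\<^sup>2) \<partial>lborel)"
    by (rule nn_integral_cong_AE)
       (use AE_lborel_singleton[of p] AE_lborel_singleton[of q] in eventually_elim, auto split: split_indicator)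
  also have "\<dots> \<le> emeasure \<mu> {p<..<q}"
    by (rule ac_part_density_le[OF ac]) auto
  also have "\<dots> = ennreal (measure \<mu> {p<..<q})"
    by (simp add: emeasure_eq_measure)
  finally have "integral {p..q} (\<lambda>x. (u' x)\<^sup>2) \<le> measure \<mu> {p<..<q}"
    by (simp add: ennreal_le_iff)
  then show ?thesis
    using has_integral_square_bound[OF assms u_has_integral[OF assms] J] assms
    by (meson diff_ge_0_iff_ge mult_left_mono order_trans)
qed

lemma measure_between_y0:
  assumes "\<xi>1 \<le> \<xi>2"
  shows "measure \<mu> {y0 \<xi>1<..<y0 \<xi>2} \<le> H \<xi>2 - H \<xi>1"
proof (cases "y0 \<xi>1 < y0 \<xi>2")
  case False
  then show ?thesis using monoD[OF H_mono assms] by simp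
next
  case True
  then have "{..<y0 \<xi>2} = {..y0 \<xi>1} \<union> {y0 \<xi>1<..<y0 \<xi>2}" by auto
  moreover have "measure \<mu> ({..y0 \<xi>1} \<union> {y0 \<xi>1<..<y0 \<xi>2})
      = measure \<mu> {..y0 \<xi>1} + measure \<mu> {y0 \<xi>1<..<y0 \<xi>2}"
    by (rule finite_measure_Union) auto
  ultimately have "F (y0 \<xi>2) = measure \<mu> {..y0 \<xi>1} + measure \<mu> {y0 \<xi>1<..<y0 \<xi>2}"
    by (simp add: F0_def)
  then show ?thesis using F_y0_le_H[of \<xi>2] H_le_measure_atMost_y0[of \<xi>1] by linarith
qed

abbreviation "U0 \<equiv> Ubar0 u \<mu>"
abbreviation "Y t \<equiv> ybar u \<mu> t"
abbreviation "U t \<equiv> Ubar u \<mu> t"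

lemma U0_increment_square:
  assumes "\<xi>1 \<le> \<xi>2"
  shows "(U0 \<xi>2 - U0 \<xi>1)\<^sup>2 \<le> (y0 \<xi>2 - y0 \<xi>1) * (H \<xi>2 - H \<xi>1)"
proof -
  have "y0 \<xi>1 \<le> y0 \<xi>2" using assms by (rule y0_mono)
  then have "(U0 \<xi>2 - U0 \<xi>1)\<^sup>2 \<le> (y0 \<xi>2 - y0 \<xi>1) * measure \<mu> {y0 \<xi>1<..<y0 \<xi>2}"
    unfolding Ubar0_def by (rule u_increment_square)
  also have "\<dots> \<le> (y0 \<xi>2 - y0 \<xi>1) * (H \<xi>2 - H \<xi>1)"
    using \<open>y0 \<xi>1 \<le> y0 \<xi>2\<close> by (intro mult_left_mono measure_between_y0[OF assms]) auto
  finally show ?thesis .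
qed

text \<open>The defect \<open>(H \<xi>2 - H \<xi>1) (Y \<xi>2 - Y \<xi>1) - (U \<xi>2 - U \<xi>1)\<^sup>2\<close> is independent of \<open>t\<close>.\<close>
lemma U_increment_square:
  assumes "\<xi>1 \<le> \<xi>2"
  shows "(U t \<xi>2 - U t \<xi>1)\<^sup>2 \<le> (H \<xi>2 - H \<xi>1) * (Y t \<xi>2 - Y t \<xi>1)"
proof -
  have "(H \<xi>2 - H \<xi>1) * (Y t \<xi>2 - Y t \<xi>1) - (U t \<xi>2 - U t \<xi>1)\<^sup>2
      = (y0 \<xi>2 - y0 \<xi>1) * (H \<xi>2 - H \<xi>1) - (U0 \<xi>2 - U0 \<xi>1)\<^sup>2"
    by (simp add: ybar_def Ubar_def power2_eq_square field_simps)
  with U0_increment_square[OF assms] show ?thesis by linarith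
qed

lemma Y_mono: "mono (Y t)"
proof (rule monoI)
  fix \<xi>1 \<xi>2 :: real assume le: "\<xi>1 \<le> \<xi>2"
  show "Y t \<xi>1 \<le> Y t \<xi>2"
  proof (cases "H \<xi>1 < H \<xi>2")
    case True
    have "0 \<le> (H \<xi>2 - H \<xi>1) * (Y t \<xi>2 - Y t \<xi>1)"
      using U_increment_square[OF le, of t] by (meson order_trans zero_le_power2)
    with True show ?thesis by (simp add: zero_le_mult_iff)
  next
    case False
    then have "H \<xi>2 = H \<xi>1" using monoD[OF H_mono le] by simp
    then have "U0 \<xi>2 = U0 \<xi>1" using U0_increment_square[OF le] by simp
    then have "Y t \<xi>2 - Y t \<xi>1 = y0 \<xi>2 - y0 \<xi>1"
      using \<open>H \<xi>2 = H \<xi>1\<close> by (simp add: ybar_def)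
    then show ?thesis using y0_mono[OF le] by simp
  qed
qed

lemma U_eq_if_Y_eq:
  assumes "Y t \<xi>1 = Y t \<xi>2"
  shows "U t \<xi>1 = U t \<xi>2"
proof (cases "\<xi>1 \<le> \<xi>2")
  case True
  then have "(U t \<xi>2 - U t \<xi>1)\<^sup>2 \<le> 0" using U_increment_square[OF True, of t] assms by simp
  then show ?thesis by simp
next
  case False
  then have "(U t \<xi>1 - U t \<xi>2)\<^sup>2 \<le> 0" using U_increment_square[of \<xi>2 \<xi>1 t] assms by simp
  then show ?thesis by simp
qed

lemma HS_u_Y: "HS_u u \<mu> t (Y t \<xi>) = U t \<xi>"
  unfolding HS_u_def by (rule U_eq_if_Y_eq) (rule someI, rule refl)

lemma U0_continuous: "continuous_on UNIV U0"
  unfolding Ubar0_def[abs_def]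
  by (rule continuous_on_compose2[OF u_continuous y0_continuous]) auto

lemma Y_continuous: "continuous_on UNIV (Y t)"
  unfolding ybar_def[abs_def]
  by (intro continuous_intros H_continuous U0_continuous y0_continuous)

lemma U_continuous: "continuous_on UNIV (U t)"
  unfolding Ubar_def[abs_def]
  by (intro continuous_intros H_continuous U0_continuous)

lemma HS_mu_eq_distr: "HS_mu u \<mu> t = distr (interval_measure H) borel (Y t)"
  using density_deriv_eq_interval_measure[OF H_mono H_nonexpansive] by (simp add: HS_mu_def)

lemma H_continuous_at_right: "continuous (at_right a) H"
  using H_continuous by (simp add: continuous_on_eq_continuous_at continuous_at_imp_continuous_at_within)

lemma Ctot_HS_mu: "Ctot (HS_mu u \<mu> t) = C"
proof -
  have "Y t \<in> borel_measurable (interval_measure H)"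
    using borel_measurable_continuous_onI[OF Y_continuous]
    by (simp add: measurable_cong_sets[OF sets_interval_measure refl])
  then have "emeasure (HS_mu u \<mu> t) UNIV = ennreal C"
    using emeasure_interval_measure_UNIV[OF H_mono H_continuous_at_right
        H_tendsto_at_bot H_tendsto_at_top]
    by (simp add: HS_mu_eq_distr emeasure_distr)
  then show ?thesis
    using total_pos by (simp add: Ctot_def measure_def)
qed

lemma
  assumes "0 < \<eta>" "\<eta> < C"
  shows UU_eq_U0_Xi: "UU u \<mu> \<eta> = U0 (Xi \<eta>)"
    and chi_HS_mu: "chi (HS_mu u \<mu> t) \<eta> = Y t (Xi \<eta>)"
    and UU_HS: "UU (HS_u u \<mu> t) (HS_mu u \<mu> t) \<eta> = U t (Xi \<eta>)"
proof -
  show "UU u \<mu> \<eta> = U0 (Xi \<eta>)"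
    by (simp add: UU_def Ubar0_def chi_eq_y0_Xi[OF assms])
  show chi: "chi (HS_mu u \<mu> t) \<eta> = Y t (Xi \<eta>)"
    unfolding HS_mu_eq_distr
    by (rule chi_distr_interval_measure[OF H_mono H_continuous_at_right H_tendsto_at_bot
          H_tendsto_at_top Y_continuous Y_mono H_Xi[OF assms] H_less_before_Xi[OF assms]])
  show "UU (HS_u u \<mu> t) (HS_mu u \<mu> t) \<eta> = U t (Xi \<eta>)"
    by (simp add: UU_def chi HS_u_Y)
qed

lemma Xi_scaled_measurable:
  assumes "continuous_on UNIV f"
  shows "(\<lambda>s. f (Xi (C * s))) \<in> borel_measurable (restrict_space borel {0<..<1})"
proof (rule measurable_compose[OF _ borel_measurable_continuous_onI[OF assms]])
  show "(\<lambda>s. Xi (C * s)) \<in> borel_measurable (restrict_space borel {0<..<1})"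
    using total_pos
    by (intro borel_measurable_mono_on_fnc mono_onI Xi_mono) (auto intro: mult_pos_pos mult_left_mono)
qed

lemma
  assumes "0 < \<eta>" "\<eta> < C"
  shows U_Xi: "U t (Xi \<eta>) = (\<eta> - C / 2) * t / 2 + U0 (Xi \<eta>)"
    and Y_Xi: "Y t (Xi \<eta>) = (\<eta> - C / 2) * t\<^sup>2 / 4 + U0 (Xi \<eta>) * t + y0 (Xi \<eta>)"
  using H_Xi[OF assms] by (simp_all add: Ubar_def ybar_def)

end

section \<open>Comparison of two solutions\<close>

locale HS_pair = d1: HS_datum \<mu>1 u1 u1' + d2: HS_datum \<mu>2 u2 u2' for \<mu>1 u1 u1' \<mu>2 u2 u2'
begin

abbreviation "C1 \<equiv> Ctot \<mu>1"
abbreviation "C2 \<equiv> Ctot \<mu>2"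

lemma quantile_range:
  assumes "s \<in> {0<..<1}"
  shows "0 < C1 * s" "C1 * s < C1" "0 < C2 * s" "C2 * s < C2"
  using assms d1.total_pos d2.total_pos by auto

lemma velocity_difference_bound:
  assumes "0 \<le> t" "s \<in> {0<..<1}"
  shows "\<bar>UU (HS_u u1 \<mu>1 t) (HS_mu u1 \<mu>1 t) (C1 * s) - UU (HS_u u2 \<mu>2 t) (HS_mu u2 \<mu>2 t) (C2 * s)\<bar>
    \<le> \<bar>UU u1 \<mu>1 (C1 * s) - UU u2 \<mu>2 (C2 * s)\<bar> + t / 4 * \<bar>C1 - C2\<bar>"
proof -
  have "\<bar>UU (HS_u u1 \<mu>1 t) (HS_mu u1 \<mu>1 t) (C1 * s) - UU (HS_u u2 \<mu>2 t) (HS_mu u2 \<mu>2 t) (C2 * s)\<bar>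
      = \<bar>(C1 * s - C1 / 2) * (t / 2) - (C2 * s - C2 / 2) * (t / 2)
         + (UU u1 \<mu>1 (C1 * s) - UU u2 \<mu>2 (C2 * s))\<bar>"
    by (simp add: quantile_range[OF assms(2)] d1.UU_HS d2.UU_HS d1.U_Xi d2.U_Xi d1.UU_eq_U0_Xi
        d2.UU_eq_U0_Xi)
  also have "\<dots> \<le> \<bar>UU u1 \<mu>1 (C1 * s) - UU u2 \<mu>2 (C2 * s)\<bar> + t / 4 * \<bar>C1 - C2\<bar>"
    using abs_centered_shift_diff_le[of "t / 2"] assms by simp
  finally show ?thesis .
qed

lemma position_difference_bound:
  assumes "0 \<le> t" "s \<in> {0<..<1}"
  shows "\<bar>chi (HS_mu u1 \<mu>1 t) (C1 * s) - chi (HS_mu u2 \<mu>2 t) (C2 * s)\<bar>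
    \<le> \<bar>chi \<mu>1 (C1 * s) - chi \<mu>2 (C2 * s)\<bar> + t * \<bar>UU u1 \<mu>1 (C1 * s) - UU u2 \<mu>2 (C2 * s)\<bar>
      + t\<^sup>2 / 8 * \<bar>C1 - C2\<bar>"
proof -
  let ?A = "UU u1 \<mu>1 (C1 * s) - UU u2 \<mu>2 (C2 * s)"
  have "\<bar>chi (HS_mu u1 \<mu>1 t) (C1 * s) - chi (HS_mu u2 \<mu>2 t) (C2 * s)\<bar>
      = \<bar>(C1 * s - C1 / 2) * (t\<^sup>2 / 4) - (C2 * s - C2 / 2) * (t\<^sup>2 / 4)
         + (chi \<mu>1 (C1 * s) - chi \<mu>2 (C2 * s) + t * ?A)\<bar>"
    by (simp add: quantile_range[OF assms(2)] d1.chi_HS_mu d2.chi_HS_mu d1.Y_Xi d2.Y_Xi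
        d1.UU_eq_U0_Xi d2.UU_eq_U0_Xi d1.chi_eq_y0_Xi d2.chi_eq_y0_Xi) (simp add: algebra_simps)
  also have "\<dots> \<le> \<bar>chi \<mu>1 (C1 * s) - chi \<mu>2 (C2 * s) + t * ?A\<bar> + t\<^sup>2 / 8 * \<bar>C1 - C2\<bar>"
    using abs_centered_shift_diff_le[of "t\<^sup>2 / 4" s C1 C2 "chi \<mu>1 (C1 * s) - chi \<mu>2 (C2 * s) + t * ?A" 0]
      assms by simp
  also have "\<dots> \<le> \<bar>chi \<mu>1 (C1 * s) - chi \<mu>2 (C2 * s)\<bar> + t * \<bar>?A\<bar> + t\<^sup>2 / 8 * \<bar>C1 - C2\<bar>"
    using assms(1) abs_triangle_ineq[of _ "t * ?A"] by (simp add: abs_mult)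
  finally show ?thesis .
qed

lemma velocity_difference_measurable:
  "(\<lambda>s. \<bar>UU (HS_u u1 \<mu>1 t) (HS_mu u1 \<mu>1 t) (C1 * s) - UU (HS_u u2 \<mu>2 t) (HS_mu u2 \<mu>2 t) (C2 * s)\<bar>)
    \<in> borel_measurable (restrict_space lborel {0..1})"
proof (rule borel_measurable_restrict_Icc_of_Ioo)
  have "(\<lambda>s. \<bar>d1.U t (d1.Xi (C1 * s)) - d2.U t (d2.Xi (C2 * s))\<bar>)
      \<in> borel_measurable (restrict_space borel {0<..<1})"
    using d1.Xi_scaled_measurable[OF d1.U_continuous] d2.Xi_scaled_measurable[OF d2.U_continuous]
    by measurable
  then show "(\<lambda>s. \<bar>UU (HS_u u1 \<mu>1 t) (HS_mu u1 \<mu>1 t) (C1 * s) - UU (HS_u u2 \<mu>2 t) (HS_mu u2 \<mu>2 t) (C2 * s)\<bar>)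
      \<in> borel_measurable (restrict_space borel {0<..<1})"
    by (rule measurable_cong[THEN iffD1, rotated])
       (simp add: space_restrict_space quantile_range d1.UU_HS d2.UU_HS)
qed

lemma position_difference_measurable:
  "(\<lambda>s. \<bar>chi \<mu>1 (C1 * s) - chi \<mu>2 (C2 * s)\<bar>) \<in> borel_measurable (restrict_space lborel {0..1})"
proof (rule borel_measurable_restrict_Icc_of_Ioo)
  have "(\<lambda>s. \<bar>d1.y0 (d1.Xi (C1 * s)) - d2.y0 (d2.Xi (C2 * s))\<bar>)
      \<in> borel_measurable (restrict_space borel {0<..<1})"
    using d1.Xi_scaled_measurable[OF d1.y0_continuous] d2.Xi_scaled_measurable[OF d2.y0_continuous]
    by measurable
  then show "(\<lambda>s. \<bar>chi \<mu>1 (C1 * s) - chi \<mu>2 (C2 * s)\<bar>) \<in> borel_measurable (restrict_space borel {0<..<1})"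
    by (rule measurable_cong[THEN iffD1, rotated])
       (simp add: space_restrict_space quantile_range d1.chi_eq_y0_Xi d2.chi_eq_y0_Xi)
qed

theorem dHS_estimate:
  assumes "0 \<le> t"
  shows "dHS (HS_u u1 \<mu>1 t) (HS_mu u1 \<mu>1 t) (HS_u u2 \<mu>2 t) (HS_mu u2 \<mu>2 t)
    \<le> ereal (1 + t + t\<^sup>2 / 8) * dHS u1 \<mu>1 u2 \<mu>2"
  unfolding dHS_def d1.Ctot_HS_mu d2.Ctot_HS_mu
  by (rule esssup_integral_estimate[OF assms abs_ge_zero abs_ge_zero abs_ge_zero
        velocity_difference_measurable position_difference_measurable
        velocity_difference_bound[OF assms] position_difference_bound[OF assms]])

end

theorem theorem2p2:
  fixes u01 u02 u01' u02' :: "real \<Rightarrow> real" and \<mu>01 \<mu>02 :: "real measure" and t :: real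
  assumes H1: "H1_with_deriv u01 u01'" "H1_with_deriv u02 u02'"
    and meas: "finite_borel_measure \<mu>01" "finite_borel_measure \<mu>02"
    and ac: "ac_part_density \<mu>01 (\<lambda>x. (u01' x)\<^sup>2)" "ac_part_density \<mu>02 (\<lambda>x. (u02' x)\<^sup>2)"
    and Cpos: "Ctot \<mu>01 > 0" "Ctot \<mu>02 > 0"
    and tails1: "(\<integral>\<^sup>+ x\<in>{..0}. ennreal (F0 \<mu>01 x) \<partial>lborel)
                 + (\<integral>\<^sup>+ x\<in>{0..}. ennreal (Ctot \<mu>01 - F0 \<mu>01 x) \<partial>lborel) < \<infinity>"
    and tails2: "(\<integral>\<^sup>+ x\<in>{..0}. ennreal (F0 \<mu>02 x) \<partial>lborel)
                 + (\<integral>\<^sup>+ x\<in>{0..}. ennreal (Ctot \<mu>02 - F0 \<mu>02 x) \<partial>lborel) < \<infinity>"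
    and t: "t \<ge> 0"
  shows "dHS (HS_u u01 \<mu>01 t) (HS_mu u01 \<mu>01 t) (HS_u u02 \<mu>02 t) (HS_mu u02 \<mu>02 t)
         \<le> ereal (1 + t + t\<^sup>2 / 8) * dHS u01 \<mu>01 u02 \<mu>02"
proof -
  interpret HS_pair \<mu>01 u01 u01' \<mu>02 u02 u02'
    using H1 meas ac Cpos by unfold_locales auto
  show ?thesis using t by (rule dHS_estimate)
qed

end
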